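(* Let $C\subset \mathbb{C}P^2$ be the Klein quartic $\{(X:Y:Z): X^3Y+Y^3Z+Z^3X=0\}$, with affine coordinates $x=X^3Y^{-2}Z^{-1}+1$, $y=-XY^{-1}$, so that $y^7=x(1-x)^2$ on $C$. Let $\zeta_7=\exp(2\pi\sqrt{-1}/7)$, let $e_0\colon[0,1]\to C$ be the path $e_0(t)=(t,\sqrt[7]{t(1-t)^2})$ (real nonnegative seventh root), let $\sigma\colon C\to C$ be the automorphism $\sigma(x,y)=(x,\zeta_7 y)$, and for $k=0,1,\dots,7$ let $\ell_k$ be the loop $\sigma^{k-1}_\ast(e_0)\cdot\sigma^{k}_\ast(e_0)^{-1}$ (first traverse $\sigma^{k-1}\circ e_0$, then $\sigma^k\circ e_0$ backwards). Let $\omega'_1=(1-x)\,dx/y^6$, $\omega'_2=(1-x)\,dx/y^5$, $\omega'_3=dx/y^3$, let $(h_1,h_2,h_3,h_4)=(1/7,2/7,4/7,1/7)$ and $\xi_i=\zeta_7^{7h_i}$. Then for $i=1,2,3$ and every $k$, $$\int_{\ell_k}\omega'_i=(\xi_i^{k-1}-\xi_i^{k})\,B(h_i,h_{i+1}),$$ where $B(u,v)=\int_0^1 t^{u-1}(1-t)^{v-1}\,dt$ is the beta function.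
   Context: The forms $\omega'_1,\omega'_2,\omega'_3$ form a basis of the holomorphic $1$-forms on the genus-$3$ curve $C$. Thus $\xi_1=\zeta_7$, $\xi_2=\zeta_7^2$, $\xi_3=\zeta_7^4$. *)

theory Defs
  imports "HOL-Analysis.Analysis"
begin

definition klein_affine :: "(complex \<times> complex) set" where
  "klein_affine = {(x, y). y ^ 7 = x * (1 - x)\<^sup>2}"

definition zeta7 :: complex where
  "zeta7 = exp (2 * of_real pi * \<i> / 7)"

definition e0 :: "real \<Rightarrow> complex \<times> complex" where
  "e0 t = (complex_of_real t, complex_of_real (root 7 (t * (1 - t)\<^sup>2)))"

definition sigma_pow :: "int \<Rightarrow> complex \<times> complex \<Rightarrow> complex \<times> complex" where
  "sigma_pow j p = (fst p, zeta7 powi j * snd p)"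

definition loop_l :: "int \<Rightarrow> real \<Rightarrow> complex \<times> complex" where
  "loop_l k = (sigma_pow (k - 1) \<circ> e0) +++ reversepath (sigma_pow k \<circ> e0)"

text \<open>The forms omega'_i = f_i(x,y) dx.\<close>
fun omega' :: "nat \<Rightarrow> complex \<Rightarrow> complex \<Rightarrow> complex" where
  "omega' (Suc 0) x y = (1 - x) / y ^ 6"
| "omega' (Suc (Suc 0)) x y = (1 - x) / y ^ 5"
| "omega' (Suc (Suc (Suc 0))) x y = 1 / y ^ 3"
| "omega' _ x y = 0"

text \<open>Integral of the 1-form f(x,y) dx along a path g : [0,1] -> C^2 has value I
  (Henstock-Kurzweil integral, which covers the improper integrals at the endpoints).\<close>
definition dx_form_integral :: "(complex \<Rightarrow> complex \<Rightarrow> complex) \<Rightarrow> (real \<Rightarrow> complex \<times> complex)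
    \<Rightarrow> complex \<Rightarrow> bool" where
  "dx_form_integral f g I \<longleftrightarrow>
     ((\<lambda>t. f (fst (g t)) (snd (g t)) * vector_derivative (\<lambda>s. fst (g s)) (at t within {0..1}))
        has_integral I) {0..1}"

fun hexp :: "nat \<Rightarrow> real" where
  "hexp (Suc 0) = 1/7"
| "hexp (Suc (Suc 0)) = 2/7"
| "hexp (Suc (Suc (Suc 0))) = 4/7"
| "hexp (Suc (Suc (Suc (Suc 0)))) = 1/7"
| "hexp _ = 0"

definition xi :: "nat \<Rightarrow> complex" where
  "xi i = zeta7 powr complex_of_real (7 * hexp i)"

end

theory Submission
  imports Defs
begin

text \<open>On \<open>\<sigma>^j \<circ> e_0\<close> one has \<open>x = t\<close> and \<open>y = \<zeta>^j (t(1-t)^2)^(1/7)\<close>. Each \<open>\<omega>'_i\<close> has the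
  shape \<open>(1-x)^m dx / y^n\<close> with \<open>n \<le> 7\<close>, so it pulls back to
  \<open>\<zeta>^(-jn) t^(-n/7) (1-t)^(m-2n/7) dt = \<xi>_i^j t^(h_i-1) (1-t)^(h_(i+1)-1) dt\<close>,
  since \<open>\<zeta>^(-n) = \<zeta>^(7-n) = \<xi>_i\<close>. Its integral is \<open>\<xi>_i^j B(h_i, h_(i+1))\<close>, and \<open>\<ell>_k\<close> runs
  forward along the path with \<open>j = k - 1\<close> and backward along the one with \<open>j = k\<close>.\<close>

lemma zeta7_pow_7: "zeta7 ^ 7 = 1"
proof -
  have "of_nat 7 * (2 * of_real pi * \<i> / 7) = 2 * of_real pi * (\<i>::complex)"
    by simp
  then show ?thesis
    by (simp only: zeta7_def exp_of_nat_mult[symmetric] exp_two_pi_i)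
qed

lemma xi_eq_zeta7_power:
  assumes "7 * hexp i = real n"
  shows "xi i = zeta7 ^ n"
proof -
  have "complex_of_real (7 * hexp i) = of_nat n"
    using assms by simp
  moreover have "zeta7 \<noteq> 0"
    unfolding zeta7_def by simp
  ultimately show ?thesis
    unfolding xi_def by (simp add: powr_nat')
qed

lemma omega'_monomial:
  assumes "i \<in> {1, 2, 3}"
  obtains n m :: nat where "n \<le> 7" and "\<And>x y. omega' i x y = (1 - x) ^ m / y ^ n"
    and "xi i = zeta7 ^ (7 - n)"
    and "hexp i = 1 - real n / 7" and "hexp (i + 1) = 1 + real m - 2 * real n / 7"
proof -
  consider "i = 1" | "i = 2" | "i = 3"
    using assms by auto
  then show thesis
  proof cases
    case 1
    then show thesis
      by (intro that[of 6 1] xi_eq_zeta7_power) (auto simp: numeral_eq_Suc)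
  next
    case 2
    then show thesis
      by (intro that[of 5 1] xi_eq_zeta7_power) (auto simp: numeral_eq_Suc)
  next
    case 3
    then show thesis
      by (intro that[of 3 0] xi_eq_zeta7_power) (auto simp: numeral_eq_Suc)
  qed
qed

lemma one_minus_pow_div_root_pow:
  fixes s :: real
  assumes "0 < s" "s < 1" "0 < N"
  shows "(1 - s) ^ m / root N (s * (1 - s)\<^sup>2) ^ n
           = s powr (- n / N) * (1 - s) powr (m - 2 * n / N)"
proof -
  have "root N (s * (1 - s)\<^sup>2) = (s * (1 - s)\<^sup>2) powr (1 / N)"
    using assms by (simp add: root_powr_inverse)
  also have "\<dots> = s powr (1 / N) * ((1 - s) powr 2) powr (1 / N)"
    using assms by (simp add: powr_mult)
  finally have "root N (s * (1 - s)\<^sup>2) ^ n = (s powr (1 / N) * (1 - s) powr (2 / N)) ^ n"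
    by (simp add: powr_powr)
  also have "\<dots> = s powr (real n / N) * (1 - s) powr (2 * real n / N)"
    using assms by (simp add: power_mult_distrib powr_power ac_simps)
  finally have "(1 - s) ^ m / root N (s * (1 - s)\<^sup>2) ^ n
      = (1 - s) powr real m / (s powr (real n / N) * (1 - s) powr (2 * real n / N))"
    using assms by (simp add: powr_realpow)
  also have "\<dots> = s powr (- real n / N) * (1 - s) powr (real m - 2 * real n / N)"
    by (simp add: powr_diff powr_minus_divide)
  finally show ?thesis .
qed

lemma omega'_along_sigma_pow_e0:
  assumes "i \<in> {1, 2, 3}" "0 < s" "s < 1"
  shows "omega' i (of_real s) (snd ((sigma_pow j \<circ> e0) s))
           = xi i powi j * of_real (s powr (hexp i - 1) * (1 - s) powr (hexp (i + 1) - 1))"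
proof -
  obtain n m :: nat where "n \<le> 7" and omega: "\<And>x y. omega' i x y = (1 - x) ^ m / y ^ n"
    and xi: "xi i = zeta7 ^ (7 - n)"
    and "hexp i = 1 - real n / 7" and "hexp (i + 1) = 1 + real m - 2 * real n / 7"
    using omega'_monomial[OF assms(1)] by metis
  then have "hexp i - 1 = - real n / 7" and "hexp (i + 1) - 1 = real m - 2 * real n / 7"
    by simp_all
  then have beta: "(1 - s) ^ m / root 7 (s * (1 - s)\<^sup>2) ^ n
      = s powr (hexp i - 1) * (1 - s) powr (hexp (i + 1) - 1)"
    using one_minus_pow_div_root_pow[of s 7 m n] assms by simp
  define w where "w = zeta7 powi j"
  have "w ^ n * w ^ (7 - n) = w ^ 7"
    using \<open>n \<le> 7\<close> by (simp flip: power_add)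
  also have "\<dots> = (zeta7 ^ 7) powi j"
    by (simp add: w_def power_int_power power_int_power' mult.commute)
  finally have "w ^ n * w ^ (7 - n) = 1"
    by (simp add: zeta7_pow_7)
  then have inverse_w: "inverse (w ^ n) = w ^ (7 - n)"
    by (rule inverse_unique)
  have "omega' i (of_real s) (snd ((sigma_pow j \<circ> e0) s))
      = (1 - of_real s) ^ m / (w * of_real (root 7 (s * (1 - s)\<^sup>2))) ^ n"
    by (simp add: omega sigma_pow_def e0_def w_def)
  also have "\<dots> = w ^ (7 - n) * of_real ((1 - s) ^ m / root 7 (s * (1 - s)\<^sup>2) ^ n)"
    unfolding inverse_w[symmetric] by (simp add: power_mult_distrib divide_inverse ac_simps)
  also have "w ^ (7 - n) = xi i powi j"
    by (simp add: xi w_def power_int_power power_int_power' mult.commute)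
  finally show ?thesis
    by (simp only: beta)
qed

lemma has_integral_rescale_to_halves:
  fixes F :: "real \<Rightarrow> 'a::real_normed_vector"
  assumes "(F has_integral I) {0..1}"
  shows "((\<lambda>t. 2 *\<^sub>R F (2 * t)) has_integral I) {0..1/2}"
    and "((\<lambda>t. 2 *\<^sub>R F (2 - 2 * t)) has_integral I) {1/2..1}"
proof -
  have F: "(F has_integral I) (cbox 0 1)"
    using assms by simp
  have "(\<lambda>x. (1 / 2) *\<^sub>R x + - ((1 / 2) *\<^sub>R 0)) ` cbox 0 (1::real) = {0..1/2}"
    using image_affinity_atLeastAtMost[of "1/2" 0 0 "1::real"] by simp
  then have "((\<lambda>t. F (2 * t)) has_integral (1 / 2) *\<^sub>R I) {0..1/2}"
    using has_integral_affinity[OF F, of 2 0] by simp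
  from has_integral_cmul[OF this, of 2]
  show "((\<lambda>t. 2 *\<^sub>R F (2 * t)) has_integral I) {0..1/2}"
    by simp
  have "(\<lambda>x. (1 / -2) *\<^sub>R x + - ((1 / -2) *\<^sub>R 2)) ` cbox 0 (1::real) = {1/2..1}"
    using image_affinity_atLeastAtMost[of "-1/2" 1 0 "1::real"] by simp
  then have "((\<lambda>t. F (2 - 2 * t)) has_integral (1 / 2) *\<^sub>R I) {1/2..1}"
    using has_integral_affinity[OF F, of "-2" 2] by (simp add: algebra_simps)
  from has_integral_cmul[OF this, of 2]
  show "((\<lambda>t. 2 *\<^sub>R F (2 - 2 * t)) has_integral I) {1/2..1}"
    by simp
qed

lemma dx_form_integral_real_param_iff:
  assumes "\<And>t. fst (g t) = of_real t"
  shows "dx_form_integral f g I \<longleftrightarrow> ((\<lambda>t. f (of_real t) (snd (g t))) has_integral I) {0..1}"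
proof -
  have "(\<lambda>s. fst (g s)) = complex_of_real"
    using assms by auto
  moreover have "(complex_of_real has_vector_derivative 1) (at t)" for t
    using has_vector_derivative_of_real[OF DERIV_ident] by simp
  ultimately have "((\<lambda>s. fst (g s)) has_vector_derivative 1) (at t)" for t
    by simp
  then have "vector_derivative (\<lambda>s. fst (g s)) (at t within {0..1}) = 1" if "t \<in> {0..1}" for t
    using that by (simp add: vector_derivative_at_within_ivl)
  then show ?thesis
    unfolding dx_form_integral_def using assms by (intro has_integral_cong) simp
qed

lemma dx_form_integral_joinpaths_reversepath:
  assumes "\<And>t. fst (g1 t) = of_real t" and "\<And>t. fst (g2 t) = of_real t"
    and "dx_form_integral f g1 I1" and "dx_form_integral f g2 I2"
  shows "dx_form_integral f (g1 +++ reversepath g2) (I1 - I2)"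
proof -
  define F1 where "F1 t = f (of_real t) (snd (g1 t))" for t
  define F2 where "F2 t = f (of_real t) (snd (g2 t))" for t
  have F1: "(F1 has_integral I1) {0..1}" and F2: "(F2 has_integral I2) {0..1}"
    using assms dx_form_integral_real_param_iff unfolding F1_def F2_def by blast+
  have half1: "((\<lambda>t. 2 * F1 (2 * t)) has_integral I1) {0..1/2}"
    using has_integral_rescale_to_halves(1)[OF F1] by (simp add: scaleR_conv_of_real)
  have half2: "((\<lambda>t. - (2 * F2 (2 - 2 * t))) has_integral - I2) {1/2..1}"
    using has_integral_neg[OF has_integral_rescale_to_halves(2)[OF F2]] by (simp add: scaleR_conv_of_real)
  define H where "H t = (if t \<le> 1/2 then 2 * F1 (2 * t) else - (2 * F2 (2 - 2 * t)))" for t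
  have "(H has_integral I1) {0..1/2}"
    by (rule has_integral_spike_finite[OF _ _ half1, of "{}"]) (auto simp: H_def)
  moreover have "(H has_integral - I2) {1/2..1}"
    by (rule has_integral_spike_finite[OF _ _ half2, of "{1/2}"]) (auto simp: H_def)
  ultimately have H: "(H has_integral I1 - I2) {0..1}"
    using has_integral_combine[of 0 "1/2" 1 H I1 "- I2"] by simp
  define x where "x s = fst ((g1 +++ reversepath g2) s)" for s
  have x: "x s = of_real (if s \<le> 1/2 then 2 * s else 2 - 2 * s)" for s
    using assms(1,2) by (simp add: x_def joinpaths_def reversepath_def)
  have "vector_derivative x (at t within {0..1}) = 2" if "0 < t" "t < 1/2" for t
  proof -
    have "((\<lambda>s. complex_of_real (2 * s)) has_vector_derivative 2) (at t)"
      by (intro has_vector_derivative_of_real derivative_eq_intros) auto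
    then have "(x has_vector_derivative 2) (at t)"
      by (rule has_vector_derivative_transform_within_open[of _ _ _ "{..<1/2}"]) (use that x in auto)
    then show ?thesis
      using that by (simp add: vector_derivative_at_within_ivl)
  qed
  moreover have "vector_derivative x (at t within {0..1}) = -2" if "1/2 < t" "t < 1" for t
  proof -
    have "((\<lambda>s. complex_of_real (2 - 2 * s)) has_vector_derivative -2) (at t)"
      by (intro has_vector_derivative_of_real derivative_eq_intros) auto
    then have "(x has_vector_derivative -2) (at t)"
      by (rule has_vector_derivative_transform_within_open[of _ _ _ "{1/2<..}"]) (use that x in auto)
    then show ?thesis
      using that by (simp add: vector_derivative_at_within_ivl)
  qed
  ultimately have "f (x t) (snd ((g1 +++ reversepath g2) t)) * vector_derivative x (at t within {0..1}) = H t"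
    if "t \<in> {0..1} - {0, 1/2, 1}" for t
    using that by (auto simp: x H_def F1_def F2_def joinpaths_def reversepath_def)
  then show ?thesis
    unfolding dx_form_integral_def x_def[symmetric]
    by (intro has_integral_spike_finite[OF _ _ H, of "{0, 1/2, 1}"]) auto
qed

lemma fst_sigma_pow_e0: "fst ((sigma_pow j \<circ> e0) t) = of_real t"
  by (simp add: sigma_pow_def e0_def)

lemma dx_form_integral_omega'_sigma_pow_e0:
  assumes "i \<in> {1, 2, 3}"
  shows "dx_form_integral (omega' i) (sigma_pow j \<circ> e0)
           (xi i powi j * of_real (Beta (hexp i) (hexp (i + 1))))"
proof -
  have "hexp i > 0" and "hexp (i + 1) > 0"
    using assms by (auto simp: numeral_eq_Suc)
  then have "((\<lambda>t. of_real (t powr (hexp i - 1) * (1 - t) powr (hexp (i + 1) - 1)))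
      has_integral complex_of_real (Beta (hexp i) (hexp (i + 1)))) {0..1}"
    by (intro has_integral_of_real has_integral_Beta_real)
  then have beta: "((\<lambda>t. xi i powi j * of_real (t powr (hexp i - 1) * (1 - t) powr (hexp (i + 1) - 1)))
      has_integral xi i powi j * of_real (Beta (hexp i) (hexp (i + 1)))) {0..1}"
    by (rule has_integral_mult_right)
  have "((\<lambda>t. omega' i (of_real t) (snd ((sigma_pow j \<circ> e0) t)))
      has_integral xi i powi j * of_real (Beta (hexp i) (hexp (i + 1)))) {0..1}"
    by (rule has_integral_spike_finite[OF _ _ beta, of "{0, 1}"])
      (use omega'_along_sigma_pow_e0 assms in auto)
  then show ?thesis
    by (simp only: dx_form_integral_real_param_iff[OF fst_sigma_pow_e0])
qed

theorem lemma4p1: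
  fixes i :: nat and k :: int
  assumes "i \<in> {1, 2, 3}" and "0 \<le> k" and "k \<le> 7"
  shows "dx_form_integral (omega' i) (loop_l k)
           ((xi i powi (k - 1) - xi i powi k) * complex_of_real (Beta (hexp i) (hexp (i + 1))))"
  using dx_form_integral_joinpaths_reversepath[OF fst_sigma_pow_e0 fst_sigma_pow_e0
      dx_form_integral_omega'_sigma_pow_e0[OF assms(1)] dx_form_integral_omega'_sigma_pow_e0[OF assms(1)]]
  unfolding loop_l_def by (simp add: left_diff_distrib)

end
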